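(* Let $\mathcal{R}$ be a finite family of axis-parallel rectangles in general position in which every pair of intersecting rectangles has a corner intersection. Then $\mathrm{tw}(G_{\mathcal{R}})\le 2\cdot\mathrm{tw}(A_{\mathcal{R}})+1$.
   Context: Rectangles are closed axis-parallel rectangles $X\times Y$; general position means all specifying intervals have pairwise distinct endpoints. Two intersecting rectangles have a corner intersection if one contains one or two corners of the other but neither contains the other. $G_{\mathcal{R}}$ is the intersection graph (vertices $\mathcal{R}$, edges between distinct intersecting rectangles). A joint is a point where the boundaries of two distinct rectangles intersect; the arrangement graph $A_{\mathcal{R}}$ has the joints as vertices, and $\{u,v\}$ is an edge iff $u,v$ are joints on the boundary of some rectangle with no other joint on that boundary between them. $\mathrm{tw}$ denotes treewidth: the minimum over tree decompositions (a tree whose nodes are vertex subsets covering all vertices and edges, with the nodes containing any fixed vertex forming a connected subtree) of the maximum node size minus one. *)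

theory Defs
  imports "HOL-Analysis.Analysis"
begin

datatype rect = Rect (xl: real) (xr: real) (yl: real) (yh: real)

definition valid_rect :: "rect \<Rightarrow> bool" where
  "valid_rect r \<longleftrightarrow> xl r < xr r \<and> yl r < yh r"

definition rset :: "rect \<Rightarrow> (real \<times> real) set" where
  "rset r = {(x, y). xl r \<le> x \<and> x \<le> xr r \<and> yl r \<le> y \<and> y \<le> yh r}"

definition corners :: "rect \<Rightarrow> (real \<times> real) set" where
  "corners r = {(xl r, yl r), (xl r, yh r), (xr r, yl r), (xr r, yh r)}"

definition bd :: "rect \<Rightarrow> (real \<times> real) set" where
  "bd r = {(x, y). (x, y) \<in> rset r \<and> (x = xl r \<or> x = xr r \<or> y = yl r \<or> y = yh r)}"

text \<open>General position: all x-endpoints pairwise distinct, all y-endpoints pairwise distinct.\<close>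
definition general_position :: "rect set \<Rightarrow> bool" where
  "general_position R \<longleftrightarrow>
     inj_on (\<lambda>(r, b::bool). if b then xl r else xr r) (R \<times> UNIV) \<and>
     inj_on (\<lambda>(r, b::bool). if b then yl r else yh r) (R \<times> UNIV)"

definition corner_intersection :: "rect \<Rightarrow> rect \<Rightarrow> bool" where
  "corner_intersection r s \<longleftrightarrow>
     rset r \<inter> rset s \<noteq> {} \<and> \<not> rset r \<subseteq> rset s \<and> \<not> rset s \<subseteq> rset r \<and>
     (card (corners s \<inter> rset r) \<in> {1, 2} \<or> card (corners r \<inter> rset s) \<in> {1, 2})"

definition int_edges :: "rect set \<Rightarrow> rect set set" where
  "int_edges R = {{r, s} | r s. r \<in> R \<and> s \<in> R \<and> r \<noteq> s \<and> rset r \<inter> rset s \<noteq> {}}"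

definition joints :: "rect set \<Rightarrow> (real \<times> real) set" where
  "joints R = {p. \<exists>r\<in>R. \<exists>s\<in>R. r \<noteq> s \<and> p \<in> bd r \<and> p \<in> bd s}"

text \<open>Arrangement graph: u, v joints on the boundary of some rectangle r, consecutive along
  that boundary, i.e. joined by an arc of the boundary containing no further joint.\<close>
definition arr_edges :: "rect set \<Rightarrow> (real \<times> real) set set" where
  "arr_edges R = {{u, v} | u v. u \<noteq> v \<and> u \<in> joints R \<and> v \<in> joints R \<and>
      (\<exists>r\<in>R. u \<in> bd r \<and> v \<in> bd r \<and>
         (\<exists>A \<subseteq> bd r. connected A \<and> u \<in> A \<and> v \<in> A \<and> A \<inter> joints R = {u, v}))}"

definition tree_adj :: "nat set set \<Rightarrow> nat set \<Rightarrow> (nat \<times> nat) set" where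
  "tree_adj TE S = {(a, b). {a, b} \<in> TE \<and> a \<in> S \<and> b \<in> S}"

definition is_tree :: "nat set \<Rightarrow> nat set set \<Rightarrow> bool" where
  "is_tree N TE \<longleftrightarrow> finite N \<and> N \<noteq> {} \<and>
     TE \<subseteq> {{a, b} | a b. a \<in> N \<and> b \<in> N \<and> a \<noteq> b} \<and>
     (\<forall>a\<in>N. \<forall>b\<in>N. (a, b) \<in> (tree_adj TE N)\<^sup>*) \<and>
     card TE = card N - 1"

definition tree_decomposition ::
  "'a set \<Rightarrow> 'a set set \<Rightarrow> nat set \<Rightarrow> nat set set \<Rightarrow> (nat \<Rightarrow> 'a set) \<Rightarrow> bool" where
  "tree_decomposition V E N TE B \<longleftrightarrow> is_tree N TE \<and>
     (\<forall>t\<in>N. B t \<subseteq> V) \<and>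
     (\<forall>v\<in>V. \<exists>t\<in>N. v \<in> B t) \<and>
     (\<forall>e\<in>E. \<exists>t\<in>N. e \<subseteq> B t) \<and>
     (\<forall>v\<in>V. \<forall>t1\<in>{t\<in>N. v \<in> B t}. \<forall>t2\<in>{t\<in>N. v \<in> B t}.
        (t1, t2) \<in> (tree_adj TE {t\<in>N. v \<in> B t})\<^sup>*)"

text \<open>Width = max bag size minus one (natural-number subtraction, so the empty graph has width 0).\<close>
definition td_width :: "nat set \<Rightarrow> (nat \<Rightarrow> 'a set) \<Rightarrow> nat" where
  "td_width N B = Max (card ` B ` N) - 1"

definition treewidth :: "'a set \<Rightarrow> 'a set set \<Rightarrow> nat" where
  "treewidth V E = Min {w. \<exists>N TE B. tree_decomposition V E N TE B \<and> w = td_width N B}"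

end

theory Submission
  imports Defs
begin

text \<open>Replace every joint in the bags of a tree decomposition of the arrangement graph by the
  rectangles whose boundary passes through it; by general position there are at most two of
  them, so bags at most double. The result is a tree decomposition of the intersection graph:
  two intersecting rectangles neither of which contains the other have crossing boundaries,
  hence a common joint, and the joints on the boundary of a single rectangle are linked in
  cyclic order by arrangement edges, so the nodes whose bags meet them form a subtree.
  Rectangles without joints are isolated and are put into extra leaf bags.\<close>

section \<open>Traversing the boundary of a rectangle\<close>

definition boundary_path :: "rect \<Rightarrow> real \<Rightarrow> real \<times> real" where
  "boundary_path r t =
     (if t \<le> 1/4 then (xl r + 4*t*(xr r - xl r), yl r)
      else if t \<le> 1/2 then (xr r, yl r + (4*t-1)*(yh r - yl r))
      else if t \<le> 3/4 then (xr r - (4*t-2)*(xr r - xl r), yh r)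
      else (xl r, yh r - (4*t-3)*(yh r - yl r)))"

definition boundary_param :: "rect \<Rightarrow> real \<times> real \<Rightarrow> real" where
  "boundary_param r p =
     (if snd p = yl r \<and> fst p < xr r then (fst p - xl r)/(4*(xr r - xl r))
      else if fst p = xr r \<and> snd p < yh r then 1/4 + (snd p - yl r)/(4*(yh r - yl r))
      else if snd p = yh r \<and> xl r < fst p then 1/2 + (xr r - fst p)/(4*(xr r - xl r))
      else 3/4 + (yh r - snd p)/(4*(yh r - yl r)))"

lemma continuous_on_boundary_path: "continuous_on UNIV (boundary_path r)"
  unfolding boundary_path_def[abs_def]
  (* safe substitutes a breakpoint t = 1/4 before simp could normalise it to t * 4 = 1 *)
  by (intro continuous_on_cases_le continuous_intros) (safe, simp_all)

lemma bd_cases: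
  assumes "valid_rect r" "(x, y) \<in> bd r"
  obtains (bottom) "y = yl r" "xl r \<le> x" "x < xr r"
    | (right) "x = xr r" "yl r \<le> y" "y < yh r"
    | (top) "y = yh r" "xl r < x" "x \<le> xr r"
    | (left) "x = xl r" "yl r < y" "y \<le> yh r"
  using assms by (fastforce simp: bd_def rset_def valid_rect_def)

lemma boundary_path_param:
  assumes "valid_rect r" "p \<in> bd r"
  shows "boundary_path r (boundary_param r p) = p"
proof -
  obtain x y where p: "p = (x, y)" by force
  have "xl r < xr r" "yl r < yh r" using assms(1) by (auto simp: valid_rect_def)
  with assms show ?thesis unfolding p
    by (cases rule: bd_cases) (auto simp: boundary_path_def boundary_param_def field_simps)
qed

lemma boundary_param_range:
  assumes "valid_rect r" "p \<in> bd r"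
  shows "boundary_param r p \<in> {0..<1}"
proof -
  obtain x y where p: "p = (x, y)" by force
  have "xl r < xr r" "yl r < yh r" using assms(1) by (auto simp: valid_rect_def)
  with assms show ?thesis unfolding p
    by (cases rule: bd_cases) (auto simp: boundary_param_def field_simps)
qed

lemma boundary_param_path:
  assumes "valid_rect r" "t \<in> {0..<1}"
  shows "boundary_param r (boundary_path r t) = t"
proof -
  define W H where "W = xr r - xl r" and "H = yh r - yl r"
  have "0 < W" "0 < H" using assms(1) by (auto simp: valid_rect_def W_def H_def)
  have scale: "0 \<le> s * L \<and> s * L < L" if "0 \<le> s" "s < 1" "0 < L" for s L :: real
    using that mult_strict_right_mono[of s 1 L] by simp
  consider "t < 1/4" | "1/4 < t" "t < 1/2" | "1/2 < t" "t < 3/4" | "3/4 < t"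
    | "t \<in> {1/4, 1/2, 3/4}"
    by fastforce
  then show ?thesis
  proof cases
    case 1
    then have "4 * t * W < W" using scale[of "4*t" W] \<open>0 < W\<close> assms(2) by simp
    then show ?thesis using 1 \<open>0 < W\<close> \<open>0 < H\<close>
      by (auto simp: boundary_path_def boundary_param_def W_def H_def field_simps)
  next
    case 2
    then have "0 < (4*t-1) * H" "(4*t-1) * H < H" using scale[of "4*t-1" H] \<open>0 < H\<close> by simp_all
    then show ?thesis using 2 \<open>0 < W\<close> \<open>0 < H\<close>
      by (auto simp: boundary_path_def boundary_param_def W_def H_def field_simps)
  next
    case 3
    then have "0 < (4*t-2) * W" "(4*t-2) * W < W" using scale[of "4*t-2" W] \<open>0 < W\<close> by simp_all
    then show ?thesis using 3 \<open>0 < W\<close> \<open>0 < H\<close>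
      by (auto simp: boundary_path_def boundary_param_def W_def H_def field_simps)
  next
    case 4
    then have "0 < (4*t-3) * H" "(4*t-3) * H < H" using scale[of "4*t-3" H] \<open>0 < H\<close> assms(2) by simp_all
    then show ?thesis using 4 \<open>0 < W\<close> \<open>0 < H\<close>
      by (auto simp: boundary_path_def boundary_param_def W_def H_def field_simps)
  next
    case 5
    then show ?thesis using \<open>0 < W\<close> \<open>0 < H\<close>
      by (safe, simp_all add: boundary_path_def boundary_param_def W_def H_def)
  qed
qed

lemma boundary_path_in_bd:
  assumes "valid_rect r" "t \<in> {0..1}"
  shows "boundary_path r t \<in> bd r"
proof -
  define W H where "W = xr r - xl r" and "H = yh r - yl r"
  have W: "W > 0" "xr r = xl r + W" and H: "H > 0" "yh r = yl r + H"
    using assms(1) by (auto simp: W_def H_def valid_rect_def)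
  consider "t \<le> 1/4" | "1/4 < t" "t \<le> 1/2" | "1/2 < t" "t \<le> 3/4" | "3/4 < t"
    by linarith
  then show ?thesis
  proof cases
    case 1
    have "0 \<le> 4*t*W" "4*t*W \<le> 1 * W" using 1 assms(2) W by (auto intro!: mult_right_mono)
    then show ?thesis using 1 W H by (simp add: boundary_path_def bd_def rset_def W_def[symmetric])
  next
    case 2
    have "0 \<le> (4*t-1)*H" "(4*t-1)*H \<le> 1 * H" using 2 H by (auto intro!: mult_right_mono)
    then show ?thesis using 2 W H by (simp add: boundary_path_def bd_def rset_def H_def[symmetric])
  next
    case 3
    have "0 \<le> (4*t-2)*W" "(4*t-2)*W \<le> 1 * W" using 3 W by (auto intro!: mult_right_mono)
    then show ?thesis using 3 W H by (simp add: boundary_path_def bd_def rset_def W_def[symmetric])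
  next
    case 4
    have "0 \<le> (4*t-3)*H" "(4*t-3)*H \<le> 1 * H" using 4 assms(2) H by (auto intro!: mult_right_mono)
    then show ?thesis using 4 W H by (simp add: boundary_path_def bd_def rset_def H_def[symmetric])
  qed
qed

lemma inj_on_boundary_param:
  assumes "valid_rect r"
  shows "inj_on (boundary_param r) (bd r)"
  by (metis assms boundary_path_param inj_onI)

section \<open>Rectangles in general position\<close>

lemma general_position_endpoints_distinct:
  assumes "general_position R" "r \<in> R" "s \<in> R" "r \<noteq> s"
  shows "xl r \<noteq> xl s \<and> xl r \<noteq> xr s \<and> xr r \<noteq> xr s \<and> xr r \<noteq> xl s \<and>
         yl r \<noteq> yl s \<and> yl r \<noteq> yh s \<and> yh r \<noteq> yh s \<and> yh r \<noteq> yl s"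
proof -
  have x: "inj_on (\<lambda>(r, b::bool). if b then xl r else xr r) (R \<times> UNIV)"
   and y: "inj_on (\<lambda>(r, b::bool). if b then yl r else yh r) (R \<times> UNIV)"
    using assms(1) by (auto simp: general_position_def)
  show ?thesis
    using inj_onD[OF x, of "(r, True)" "(s, True)"] inj_onD[OF x, of "(r, True)" "(s, False)"]
      inj_onD[OF x, of "(r, False)" "(s, False)"] inj_onD[OF x, of "(r, False)" "(s, True)"]
      inj_onD[OF y, of "(r, True)" "(s, True)"] inj_onD[OF y, of "(r, True)" "(s, False)"]
      inj_onD[OF y, of "(r, False)" "(s, False)"] inj_onD[OF y, of "(r, False)" "(s, True)"]
      assms(2-4)
    by auto
qed

lemma bd_coordinate_is_endpoint:
  "p \<in> bd r \<Longrightarrow> fst p = xl r \<or> fst p = xr r \<or> snd p = yl r \<or> snd p = yh r"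
  by (auto simp: bd_def)

text \<open>A common boundary point of two rectangles in general position lies on a vertical side of
  one of them and on a horizontal side of the other.\<close>

lemma bd_inter_subset_endpoints:
  assumes "general_position R" "r \<in> R" "s \<in> R" "r \<noteq> s"
  shows "bd r \<inter> bd s \<subseteq> {xl r, xr r, xl s, xr s} \<times> {yl r, yh r, yl s, yh s}"
proof
  fix p assume "p \<in> bd r \<inter> bd s"
  then have "fst p = xl r \<or> fst p = xr r \<or> snd p = yl r \<or> snd p = yh r"
    "fst p = xl s \<or> fst p = xr s \<or> snd p = yl s \<or> snd p = yh s"
    using bd_coordinate_is_endpoint by blast+
  then show "p \<in> {xl r, xr r, xl s, xr s} \<times> {yl r, yh r, yl s, yh s}"
    using general_position_endpoints_distinct[OF assms] by (cases p) auto
qed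

lemma finite_joints:
  assumes "general_position R" "finite R"
  shows "finite (joints R)"
proof (rule finite_subset)
  show "joints R \<subseteq> (\<Union>r\<in>R. {xl r, xr r}) \<times> (\<Union>r\<in>R. {yl r, yh r})"
    using bd_inter_subset_endpoints[OF assms(1)] unfolding joints_def by blast
  show "finite ((\<Union>r\<in>R. {xl r, xr r}) \<times> (\<Union>r\<in>R. {yl r, yh r}))"
    using assms(2) by simp
qed

lemma card_rects_through_point_le_2:
  assumes "general_position R"
  shows "card {r\<in>R. p \<in> bd r} \<le> 2"
proof (rule ccontr)
  assume "\<not> ?thesis"
  then have "3 \<le> card {r\<in>R. p \<in> bd r}" by simp
  then obtain T where "T \<subseteq> {r\<in>R. p \<in> bd r}" "card T = 3"
    by (rule obtain_subset_with_card_n)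
  then obtain r s t where "r \<in> R" "s \<in> R" "t \<in> R" "r \<noteq> s" "r \<noteq> t" "s \<noteq> t"
    "p \<in> bd r" "p \<in> bd s" "p \<in> bd t"
    by (auto simp: card_3_iff)
  then show False
    using general_position_endpoints_distinct[OF assms] bd_coordinate_is_endpoint
    by metis
qed

lemma card_rects_meeting_le:
  assumes "general_position R" "finite A"
  shows "card {r\<in>R. bd r \<inter> A \<noteq> {}} \<le> 2 * card A"
proof -
  have "{r\<in>R. bd r \<inter> A \<noteq> {}} = (\<Union>p\<in>A. {r\<in>R. p \<in> bd r})" by blast
  then have "card {r\<in>R. bd r \<inter> A \<noteq> {}} \<le> (\<Sum>p\<in>A. card {r\<in>R. p \<in> bd r})"
    using card_UN_le[OF assms(2)] by simp
  also have "\<dots> \<le> (\<Sum>p\<in>A. 2)" using card_rects_through_point_le_2[OF assms(1)] by (rule sum_mono)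
  finally show ?thesis by simp
qed

lemma overlapping_intervals_cross:
  fixes a1 a2 b1 b2 c1 c2 d1 d2 :: real
  assumes "a1 < a2" "b1 < b2" "c1 < c2" "d1 < d2" "a1 \<le> c2" "c1 \<le> a2" "b1 \<le> d2" "d1 \<le> b2"
    "\<not> (c1 \<le> a1 \<and> a2 \<le> c2 \<and> d1 \<le> b1 \<and> b2 \<le> d2)" "\<not> (a1 \<le> c1 \<and> c2 \<le> a2 \<and> b1 \<le> d1 \<and> d2 \<le> b2)"
  shows "((c1 \<le> a1 \<and> a1 \<le> c2) \<or> (c1 \<le> a2 \<and> a2 \<le> c2)) \<and> ((b1 \<le> d1 \<and> d1 \<le> b2) \<or> (b1 \<le> d2 \<and> d2 \<le> b2)) \<or>
         ((a1 \<le> c1 \<and> c1 \<le> a2) \<or> (a1 \<le> c2 \<and> c2 \<le> a2)) \<and> ((d1 \<le> b1 \<and> b1 \<le> d2) \<or> (d1 \<le> b2 \<and> b2 \<le> d2))"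
  using assms by smt

lemma bd_meet_if_not_nested:
  assumes "valid_rect r" "valid_rect s" "rset r \<inter> rset s \<noteq> {}"
    "\<not> rset r \<subseteq> rset s" "\<not> rset s \<subseteq> rset r"
  shows "bd r \<inter> bd s \<noteq> {}"
proof -
  have "\<not> (xl s \<le> xl r \<and> xr r \<le> xr s \<and> yl s \<le> yl r \<and> yh r \<le> yh s)"
    "\<not> (xl r \<le> xl s \<and> xr s \<le> xr r \<and> yl r \<le> yl s \<and> yh s \<le> yh r)"
    using assms(4,5) by (auto simp: rset_def)
  moreover have "xl r \<le> xr s" "xl s \<le> xr r" "yl r \<le> yh s" "yl s \<le> yh r"
    using assms(3) by (auto simp: rset_def)
  moreover have "xl r < xr r" "yl r < yh r" "xl s < xr s" "yl s < yh s"
    using assms(1,2) by (auto simp: valid_rect_def)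
  ultimately have "(\<exists>x\<in>{xl r, xr r}. \<exists>y\<in>{yl s, yh s}. (x, y) \<in> rset r \<inter> rset s) \<or>
                  (\<exists>x\<in>{xl s, xr s}. \<exists>y\<in>{yl r, yh r}. (x, y) \<in> rset r \<inter> rset s)"
    using overlapping_intervals_cross[of "xl r" "xr r" "yl r" "yh r" "xl s" "xr s" "yl s" "yh s"]
    unfolding rset_def by auto
  then show ?thesis unfolding bd_def by blast
qed

lemma int_edge_has_common_joint:
  assumes "\<forall>r\<in>R. valid_rect r"
    and "\<forall>r\<in>R. \<forall>s\<in>R. r \<noteq> s \<and> rset r \<inter> rset s \<noteq> {} \<longrightarrow> corner_intersection r s"
    and "e \<in> int_edges R"
  shows "\<exists>p\<in>joints R. e \<subseteq> {r\<in>R. p \<in> bd r}"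
proof -
  obtain r s where e: "e = {r, s}" "r \<in> R" "s \<in> R" "r \<noteq> s" "rset r \<inter> rset s \<noteq> {}"
    using assms(3) by (auto simp: int_edges_def)
  \<comment> \<open>of a corner intersection only the non-nestedness is needed\<close>
  then have "\<not> rset r \<subseteq> rset s" "\<not> rset s \<subseteq> rset r"
    using assms(2) by (auto simp: corner_intersection_def)
  then obtain p where p: "p \<in> bd r" "p \<in> bd s"
    using bd_meet_if_not_nested e assms(1) by blast
  then have "p \<in> joints R" using e unfolding joints_def by blast
  with p show ?thesis using e by blast
qed

section \<open>Tree decompositions\<close>

lemma tree_decomposition_nodes:
  "tree_decomposition V E N TE B \<Longrightarrow> finite N \<and> N \<noteq> {}"
  by (simp add: tree_decomposition_def is_tree_def)

lemma card_bag_le_td_width: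
  assumes "tree_decomposition V E N TE B" "t \<in> N"
  shows "card (B t) \<le> td_width N B + 1"
proof -
  have "card (B t) \<le> Max (card ` B ` N)"
    using tree_decomposition_nodes[OF assms(1)] assms(2) by simp
  then show ?thesis by (simp add: td_width_def)
qed

lemma td_width_le_if_bags_le:
  assumes "tree_decomposition V E N TE B" "\<forall>t\<in>N. card (B t) \<le> c"
  shows "td_width N B \<le> c - 1"
  using tree_decomposition_nodes[OF assms(1)] assms(2) by (simp add: td_width_def diff_le_mono)

lemma finite_td_widths:
  assumes "finite V"
  shows "finite {w. \<exists>N TE B. tree_decomposition V E N TE B \<and> w = td_width N B}"
proof (rule finite_subset)
  show "{w. \<exists>N TE B. tree_decomposition V E N TE B \<and> w = td_width N B} \<subseteq> {..card V}"
  proof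
    fix w assume "w \<in> {w. \<exists>N TE B. tree_decomposition V E N TE B \<and> w = td_width N B}"
    then obtain N TE B where td: "tree_decomposition V E N TE B" and w: "w = td_width N B" by blast
    have "\<forall>t\<in>N. card (B t) \<le> card V"
      using td assms by (auto simp: tree_decomposition_def intro: card_mono)
    from td_width_le_if_bags_le[OF td this] show "w \<in> {..card V}" using w by simp
  qed
qed simp

lemma treewidth_le_td_width:
  assumes "finite V" "tree_decomposition V E N TE B"
  shows "treewidth V E \<le> td_width N B"
  unfolding treewidth_def using assms(2) by (intro Min_le finite_td_widths[OF assms(1)]) blast

lemma treewidth_attained:
  assumes "finite V" "\<forall>e\<in>E. e \<subseteq> V"
  obtains N TE B where "tree_decomposition V E N TE B" "td_width N B = treewidth V E"
proof -
  have "tree_decomposition V E {0} {} (\<lambda>_. V)"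
    using assms(2) by (auto simp: tree_decomposition_def is_tree_def tree_adj_def)
  then have "{w. \<exists>N TE B. tree_decomposition V E N TE B \<and> w = td_width N B} \<noteq> {}" by blast
  then have "treewidth V E \<in> {w. \<exists>N TE B. tree_decomposition V E N TE B \<and> w = td_width N B}"
    unfolding treewidth_def using finite_td_widths[OF assms(1)] by (rule Min_in[rotated])
  then show ?thesis using that by auto
qed

lemma rtrancl_tree_adj_mono:
  "TE \<subseteq> TE' \<Longrightarrow> S \<subseteq> S' \<Longrightarrow> (a, b) \<in> (tree_adj TE S)\<^sup>* \<Longrightarrow> (a, b) \<in> (tree_adj TE' S')\<^sup>*"
  using rtrancl_mono[of "tree_adj TE S" "tree_adj TE' S'"] by (auto simp: tree_adj_def)

lemma is_tree_add_leaf: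
  assumes tree: "is_tree N TE" and n: "n \<notin> N" and t0: "t0 \<in> N"
  shows "is_tree (insert n N) (insert {t0, n} TE)"
proof -
  let ?N = "insert n N" and ?TE = "insert {t0, n} TE"
  have fin: "finite N" and TE: "TE \<subseteq> {{a, b} | a b. a \<in> N \<and> b \<in> N \<and> a \<noteq> b}"
    and conn: "\<forall>a\<in>N. \<forall>b\<in>N. (a, b) \<in> (tree_adj TE N)\<^sup>*" and card: "card TE = card N - 1"
    using tree by (auto simp: is_tree_def)
  have "TE \<subseteq> (\<lambda>(a, b). {a, b}) ` (N \<times> N)" using TE by auto
  then have "finite TE" using fin by (meson finite_SigmaI finite_imageI finite_subset)
  moreover have "{t0, n} \<notin> TE" using TE n by (auto simp: doubleton_eq_iff)
  moreover have "card N > 0" using fin t0 by (auto simp: card_gt_0_iff)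
  ultimately have card': "card ?TE = card ?N - 1"
    using fin n card by simp
  have edge: "(t0, n) \<in> tree_adj ?TE ?N" "(n, t0) \<in> tree_adj ?TE ?N"
    using t0 by (auto simp: tree_adj_def insert_commute)
  have old: "(a, b) \<in> (tree_adj ?TE ?N)\<^sup>*" if "a \<in> N" "b \<in> N" for a b
    using rtrancl_tree_adj_mono[of TE ?TE N ?N a b] conn that by auto
  have to_leaf: "(a, n) \<in> (tree_adj ?TE ?N)\<^sup>*" if "a \<in> N" for a
    using rtrancl_into_rtrancl[OF old[OF that t0] edge(1)] .
  have from_leaf: "(n, b) \<in> (tree_adj ?TE ?N)\<^sup>*" if "b \<in> N" for b
    using converse_rtrancl_into_rtrancl[OF edge(2) old[OF t0 that]] .
  have conn': "(a, b) \<in> (tree_adj ?TE ?N)\<^sup>*" if "a \<in> ?N" "b \<in> ?N" for a b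
    using that old to_leaf from_leaf by (cases "a = n"; cases "b = n") auto
  have "{t0, n} \<in> {{a, b} | a b. a \<in> ?N \<and> b \<in> ?N \<and> a \<noteq> b}"
    using t0 n by blast
  then have TE': "?TE \<subseteq> {{a, b} | a b. a \<in> ?N \<and> b \<in> ?N \<and> a \<noteq> b}"
    using TE by blast
  show ?thesis using fin card' conn' TE' by (auto simp: is_tree_def)
qed

lemma tree_decomposition_add_leaf:
  assumes td: "tree_decomposition V E N TE B" and v: "v \<notin> V" and n: "n \<notin> N" and t0: "t0 \<in> N"
  shows "tree_decomposition (insert v V) E (insert n N) (insert {t0, n} TE) (B(n := {v}))"
  unfolding tree_decomposition_def
proof (intro conjI ballI)
  let ?B = "B(n := {v})"
  have tree: "is_tree N TE" and bags: "\<forall>t\<in>N. B t \<subseteq> V" and cover: "\<forall>w\<in>V. \<exists>t\<in>N. w \<in> B t"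
    and edges: "\<forall>e\<in>E. \<exists>t\<in>N. e \<subseteq> B t"
    and subtree: "\<forall>w\<in>V. \<forall>t1\<in>{t\<in>N. w \<in> B t}. \<forall>t2\<in>{t\<in>N. w \<in> B t}.
        (t1, t2) \<in> (tree_adj TE {t\<in>N. w \<in> B t})\<^sup>*"
    using td by (simp_all add: tree_decomposition_def)
  show "is_tree (insert n N) (insert {t0, n} TE)" by (rule is_tree_add_leaf[OF tree n t0])
  show "?B t \<subseteq> insert v V" if "t \<in> insert n N" for t using that bags by auto
  show "\<exists>t\<in>insert n N. w \<in> ?B t" if "w \<in> insert v V" for w
    using that cover n by (cases "w = v") force+
  show "\<exists>t\<in>insert n N. e \<subseteq> ?B t" if "e \<in> E" for e
    using that edges n by (metis fun_upd_other insertCI)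
  fix w t1 t2
  assume w: "w \<in> insert v V" and t1: "t1 \<in> {t \<in> insert n N. w \<in> ?B t}"
    and t2: "t2 \<in> {t \<in> insert n N. w \<in> ?B t}"
  show "(t1, t2) \<in> (tree_adj (insert {t0, n} TE) {t \<in> insert n N. w \<in> ?B t})\<^sup>*"
  proof (cases "w = v")
    case True
    then have "t1 = n" "t2 = n" using t1 t2 bags v by (auto split: if_splits)
    then show ?thesis by simp
  next
    case False
    then have S: "{t \<in> insert n N. w \<in> ?B t} = {t\<in>N. w \<in> B t}" using n by auto
    have "(t1, t2) \<in> (tree_adj TE {t\<in>N. w \<in> B t})\<^sup>*"
      using subtree w t1 t2 False unfolding S by blast
    then show ?thesis unfolding S by (rule rtrancl_tree_adj_mono[rotated 2]) auto
  qed
qed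

lemma tree_decomposition_add_isolated:
  assumes "finite I" "tree_decomposition V E N TE B" "I \<inter> V = {}"
    and "\<forall>t\<in>N. card (B t) \<le> c" "1 \<le> c"
  obtains N' TE' B' where "tree_decomposition (V \<union> I) E N' TE' B'" "\<forall>t\<in>N'. card (B' t) \<le> c"
  using assms
proof (induction I arbitrary: thesis rule: finite_induct)
  case empty
  then show ?case by auto
next
  case (insert v I)
  then obtain N' TE' B' where td: "tree_decomposition (V \<union> I) E N' TE' B'"
    and bags: "\<forall>t\<in>N'. card (B' t) \<le> c"
    by auto
  obtain n where n: "n \<notin> N'"
    using tree_decomposition_nodes[OF td] by (meson ex_new_if_finite infinite_UNIV_nat)
  obtain t0 where t0: "t0 \<in> N'" using tree_decomposition_nodes[OF td] by blast
  have "v \<notin> V \<union> I" using insert by auto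
  from tree_decomposition_add_leaf[OF td this n t0] insert.prems(1)[of "insert n N'"] bags
    insert.prems(5)
  show ?case by simp
qed

lemma treewidth_le_if_tree_decomposition_of_subset:
  assumes "finite V" "W \<subseteq> V" "tree_decomposition W E N TE B" "\<forall>t\<in>N. card (B t) \<le> c" "1 \<le> c"
  shows "treewidth V E \<le> c - 1"
proof -
  have "finite (V - W)" "(V - W) \<inter> W = {}" using assms(1) by auto
  then obtain N' TE' B' where td: "tree_decomposition (W \<union> (V - W)) E N' TE' B'"
    and bags: "\<forall>t\<in>N'. card (B' t) \<le> c"
    by (rule tree_decomposition_add_isolated[OF _ assms(3) _ assms(4,5)])
  have "W \<union> (V - W) = V" using assms(2) by blast
  with td have "tree_decomposition V E N' TE' B'" by simp
  then show ?thesis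
    using treewidth_le_td_width[OF assms(1)] td_width_le_if_bags_le bags by (meson le_trans)
qed

definition induces_connected :: "'a set set \<Rightarrow> 'a set \<Rightarrow> bool" where
  "induces_connected E S \<longleftrightarrow> (\<forall>X\<subseteq>S. X \<noteq> {} \<longrightarrow> X \<noteq> S \<longrightarrow> (\<exists>u\<in>X. \<exists>v\<in>S - X. {u, v} \<in> E))"

lemma tree_decomposition_connected_subtree:
  assumes td: "tree_decomposition V E N TE B"
    and S: "S \<subseteq> V" "induces_connected E S"
    and t1: "t1 \<in> N" "S \<inter> B t1 \<noteq> {}" and t2: "t2 \<in> N" "S \<inter> B t2 \<noteq> {}"
  shows "(t1, t2) \<in> (tree_adj TE {t\<in>N. S \<inter> B t \<noteq> {}})\<^sup>*"
proof -
  let ?T = "{t\<in>N. S \<inter> B t \<noteq> {}}"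
  have edges: "\<forall>e\<in>E. \<exists>t\<in>N. e \<subseteq> B t"
    and subtree: "\<forall>v\<in>V. \<forall>t1\<in>{t\<in>N. v \<in> B t}. \<forall>t2\<in>{t\<in>N. v \<in> B t}.
        (t1, t2) \<in> (tree_adj TE {t\<in>N. v \<in> B t})\<^sup>*"
    using td by (simp_all add: tree_decomposition_def)
  have path: "(ta, tb) \<in> (tree_adj TE ?T)\<^sup>*"
    if "q \<in> S" "ta \<in> N" "q \<in> B ta" "tb \<in> N" "q \<in> B tb" for q ta tb
  proof -
    have "(ta, tb) \<in> (tree_adj TE {t\<in>N. q \<in> B t})\<^sup>*" using subtree S(1) that by blast
    then show ?thesis by (rule rtrancl_tree_adj_mono[rotated 2]) (use that in auto)
  qed
  define Q where "Q = {q\<in>S. \<forall>t\<in>N. q \<in> B t \<longrightarrow> (t1, t) \<in> (tree_adj TE ?T)\<^sup>*}"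
  have "Q = S" \<comment> \<open>no edge of S leaves Q, since both its ends lie in a common bag\<close>
  proof (rule ccontr)
    assume "Q \<noteq> S"
    moreover have "Q \<subseteq> S" by (auto simp: Q_def)
    moreover obtain p where "p \<in> S" "p \<in> B t1" using t1 by blast
    then have "p \<in> Q" using t1 path unfolding Q_def by blast
    ultimately obtain u v where u: "u \<in> Q" and v: "v \<in> S - Q" and uv: "{u, v} \<in> E"
      using S(2) unfolding induces_connected_def by blast
    obtain ts where ts: "ts \<in> N" "{u, v} \<subseteq> B ts" using edges uv by blast
    have "(t1, ts) \<in> (tree_adj TE ?T)\<^sup>*" using u ts unfolding Q_def by blast
    then have "v \<in> Q" using v ts path[of v ts] unfolding Q_def by (blast intro: rtrancl_trans)
    with v show False by blast
  qed
  moreover obtain p where "p \<in> S" "p \<in> B t2" using t2 by blast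
  ultimately show ?thesis using t2 unfolding Q_def by blast
qed

lemma tree_decomposition_of_model:
  fixes \<phi> :: "'b \<Rightarrow> 'a set"
  assumes td: "tree_decomposition V E N TE B"
    and sub: "\<And>w. w \<in> W \<Longrightarrow> \<phi> w \<subseteq> V"
    and nonempty: "\<And>w. w \<in> W \<Longrightarrow> \<phi> w \<noteq> {}"
    and conn: "\<And>w. w \<in> W \<Longrightarrow> induces_connected E (\<phi> w)"
    and adj: "\<And>e. e \<in> F \<Longrightarrow> \<exists>v\<in>V. e \<subseteq> {w\<in>W. v \<in> \<phi> w}"
  shows "tree_decomposition W F N TE (\<lambda>t. {w\<in>W. \<phi> w \<inter> B t \<noteq> {}})"
  unfolding tree_decomposition_def
proof (intro conjI ballI)
  let ?B = "\<lambda>t. {w\<in>W. \<phi> w \<inter> B t \<noteq> {}}"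
  have cover: "\<forall>v\<in>V. \<exists>t\<in>N. v \<in> B t" using td by (simp add: tree_decomposition_def)
  show "is_tree N TE" using td by (simp add: tree_decomposition_def)
  show "?B t \<subseteq> W" for t by blast
  show "\<exists>t\<in>N. w \<in> ?B t" if w: "w \<in> W" for w
  proof -
    obtain p where "p \<in> \<phi> w" using nonempty[OF w] by blast
    moreover obtain t where "t \<in> N" "p \<in> B t" using cover sub[OF w] \<open>p \<in> \<phi> w\<close> by blast
    ultimately show ?thesis using w by blast
  qed
  show "\<exists>t\<in>N. e \<subseteq> ?B t" if e: "e \<in> F" for e
  proof -
    obtain v where "v \<in> V" "e \<subseteq> {w\<in>W. v \<in> \<phi> w}" using adj[OF e] by blast
    moreover obtain t where "t \<in> N" "v \<in> B t" using cover \<open>v \<in> V\<close> by blast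
    ultimately show ?thesis by blast
  qed
  fix w t1 t2
  assume w: "w \<in> W" and "t1 \<in> {t\<in>N. w \<in> ?B t}" "t2 \<in> {t\<in>N. w \<in> ?B t}"
  moreover have "{t\<in>N. w \<in> ?B t} = {t\<in>N. \<phi> w \<inter> B t \<noteq> {}}" using w by blast
  ultimately show "(t1, t2) \<in> (tree_adj TE {t\<in>N. w \<in> ?B t})\<^sup>*"
    using tree_decomposition_connected_subtree[OF td sub[OF w] conn[OF w]] by simp
qed

section \<open>The joints on the boundary of a rectangle\<close>

definition boundary_joints :: "rect set \<Rightarrow> rect \<Rightarrow> (real \<times> real) set" where
  "boundary_joints R r = joints R \<inter> bd r"

lemma arr_edge_if_consecutive:
  assumes r: "valid_rect r" "r \<in> R"
    and a: "a \<in> boundary_joints R r" and b: "b \<in> boundary_joints R r"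
    and ab: "boundary_param r a < boundary_param r b"
    and gap: "\<And>q. q \<in> boundary_joints R r \<Longrightarrow>
      boundary_param r q \<notin> {boundary_param r a<..<boundary_param r b}"
  shows "{a, b} \<in> arr_edges R"
proof -
  let ?\<tau> = "boundary_param r"
  define A where "A = boundary_path r ` {?\<tau> a..?\<tau> b}"
  have a_bd: "a \<in> bd r" and b_bd: "b \<in> bd r" and a_j: "a \<in> joints R" and b_j: "b \<in> joints R"
    using a b by (auto simp: boundary_joints_def)
  have range: "{?\<tau> a..?\<tau> b} \<subseteq> {0..<1}"
    using boundary_param_range[OF r(1) a_bd] boundary_param_range[OF r(1) b_bd] by auto
  have "connected A"
    unfolding A_def by (intro connected_continuous_image continuous_on_subset[OF continuous_on_boundary_path]) auto
  moreover have "A \<subseteq> bd r"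
    unfolding A_def using range boundary_path_in_bd[OF r(1)] by auto
  moreover have "a \<in> A"
    unfolding A_def using ab
    by (intro rev_image_eqI[of "?\<tau> a"]) (auto simp: boundary_path_param[OF r(1) a_bd])
  moreover have "b \<in> A"
    unfolding A_def using ab
    by (intro rev_image_eqI[of "?\<tau> b"]) (auto simp: boundary_path_param[OF r(1) b_bd])
  moreover have "A \<inter> joints R \<subseteq> {a, b}"
  proof
    fix q assume q: "q \<in> A \<inter> joints R"
    then obtain t where t: "t \<in> {?\<tau> a..?\<tau> b}" "q = boundary_path r t" unfolding A_def by auto
    then have "?\<tau> q = t" using boundary_param_path[OF r(1)] range by auto
    moreover have "q \<in> boundary_joints R r" using q \<open>A \<subseteq> bd r\<close> by (auto simp: boundary_joints_def)
    ultimately have "t = ?\<tau> a \<or> t = ?\<tau> b" using gap t(1) by fastforce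
    then show "q \<in> {a, b}"
      using t(2) boundary_path_param[OF r(1) a_bd] boundary_path_param[OF r(1) b_bd] by auto
  qed
  ultimately show ?thesis
    unfolding arr_edges_def using r(2) ab a_bd b_bd a_j b_j by blast
qed

text \<open>Among the pairs of joints on different sides of a cut, one at minimal parameter distance is
  consecutive along the boundary.\<close>

lemma boundary_joints_induce_connected:
  assumes r: "valid_rect r" "r \<in> R" and fin: "finite (joints R)"
  shows "induces_connected (arr_edges R) (boundary_joints R r)"
  unfolding induces_connected_def
proof (intro allI impI)
  let ?J = "boundary_joints R r" and ?\<tau> = "boundary_param r"
  fix X assume X: "X \<subseteq> ?J" "X \<noteq> {}" "X \<noteq> ?J"
  define P where "P = {(u, v). u \<in> ?J \<and> v \<in> ?J \<and> (u \<in> X \<longleftrightarrow> v \<notin> X) \<and> ?\<tau> u < ?\<tau> v}"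
  have "finite P"
    using fin by (intro finite_subset[of P "?J \<times> ?J"]) (auto simp: P_def boundary_joints_def)
  obtain x y where xy: "x \<in> X" "x \<in> ?J" "y \<in> ?J - X" using X by blast
  then have "?\<tau> x \<noteq> ?\<tau> y"
    using inj_onD[OF inj_on_boundary_param[OF r(1)], of x y] by (auto simp: boundary_joints_def)
  then have "(x, y) \<in> P \<or> (y, x) \<in> P" using xy unfolding P_def by auto
  then have "P \<noteq> {}" by blast
  then obtain uv where "is_arg_min (\<lambda>(u, v). ?\<tau> v - ?\<tau> u) (\<lambda>p. p \<in> P) uv"
    using ex_is_arg_min_if_finite[OF \<open>finite P\<close>] by blast
  then obtain u v where uv: "(u, v) \<in> P"
    and min: "\<And>u' v'. (u', v') \<in> P \<Longrightarrow> \<not> ?\<tau> v' - ?\<tau> u' < ?\<tau> v - ?\<tau> u"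
    unfolding is_arg_min_def by (cases uv) fastforce
  have "(u \<in> X \<and> v \<in> ?J - X) \<or> (v \<in> X \<and> u \<in> ?J - X)" using uv by (auto simp: P_def)
  moreover have "{u, v} \<in> arr_edges R"
  proof (rule arr_edge_if_consecutive[OF r])
    show "u \<in> ?J" "v \<in> ?J" "?\<tau> u < ?\<tau> v" using uv by (auto simp: P_def)
    fix q assume q: "q \<in> ?J"
    show "?\<tau> q \<notin> {?\<tau> u<..<?\<tau> v}"
    proof
      assume "?\<tau> q \<in> {?\<tau> u<..<?\<tau> v}"
      then have "(u, q) \<in> P \<or> (q, v) \<in> P" using uv q by (auto simp: P_def)
      then show False using min \<open>?\<tau> q \<in> {?\<tau> u<..<?\<tau> v}\<close> by fastforce
    qed
  qed
  ultimately show "\<exists>u\<in>X. \<exists>v\<in>?J - X. {u, v} \<in> arr_edges R"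
    by (metis insert_commute)
qed

theorem lemma6:
  fixes R :: "rect set"
  assumes "finite R"
    and "\<forall>r\<in>R. valid_rect r"
    and "general_position R"
    and "\<forall>r\<in>R. \<forall>s\<in>R. r \<noteq> s \<and> rset r \<inter> rset s \<noteq> {} \<longrightarrow> corner_intersection r s"
  shows "treewidth R (int_edges R) \<le> 2 * treewidth (joints R) (arr_edges R) + 1"
proof -
  let ?k = "treewidth (joints R) (arr_edges R)"
  let ?W = "{r\<in>R. boundary_joints R r \<noteq> {}}"
  have fin: "finite (joints R)" using finite_joints[OF assms(3,1)] .
  have "\<forall>e\<in>arr_edges R. e \<subseteq> joints R" by (auto simp: arr_edges_def)
  then obtain N TE B where td: "tree_decomposition (joints R) (arr_edges R) N TE B"
    and width: "td_width N B = ?k"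
    by (rule treewidth_attained[OF fin])
  have td_int: "tree_decomposition ?W (int_edges R) N TE (\<lambda>t. {r\<in>?W. boundary_joints R r \<inter> B t \<noteq> {}})"
  proof (rule tree_decomposition_of_model[OF td])
    show "induces_connected (arr_edges R) (boundary_joints R r)" if "r \<in> ?W" for r
      using boundary_joints_induce_connected assms(2) fin that by blast
    show "\<exists>p\<in>joints R. e \<subseteq> {r\<in>?W. p \<in> boundary_joints R r}" if "e \<in> int_edges R" for e
      using int_edge_has_common_joint[OF assms(2,4) that] by (auto simp: boundary_joints_def)
  qed (auto simp: boundary_joints_def)
  have bags_int: "card {r\<in>?W. boundary_joints R r \<inter> B t \<noteq> {}} \<le> 2 * ?k + 2"
    if t: "t \<in> N" for t
  proof -
    have "finite (B t)" using td t fin by (auto simp: tree_decomposition_def intro: finite_subset)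
    have "card {r\<in>?W. boundary_joints R r \<inter> B t \<noteq> {}} \<le> card {r\<in>R. bd r \<inter> B t \<noteq> {}}"
      using assms(1) by (intro card_mono) (auto simp: boundary_joints_def)
    also have "\<dots> \<le> 2 * card (B t)" by (rule card_rects_meeting_le[OF assms(3) \<open>finite (B t)\<close>])
    also have "\<dots> \<le> 2 * ?k + 2" using card_bag_le_td_width[OF td t] width by simp
    finally show ?thesis .
  qed
  have "treewidth R (int_edges R) \<le> (2 * ?k + 2) - 1"
    by (rule treewidth_le_if_tree_decomposition_of_subset[OF assms(1) _ td_int]) (use bags_int in auto)
  then show ?thesis by simp
qed

end
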